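(* Under the setting of the epoch-based policy $\pi_\epsilon$ described in the context (with i.i.d. arrival vectors of mean $\boldsymbol\lambda$ and $0<\epsilon<1-\hat T(\boldsymbol\lambda)$), let $T_m=t_m-t_{m-1}$ be the length of the $m$-th epoch and $S_m$ the system state at time $t_m$; $\{(T_m,S_m)\}_{m\ge1}$ is a homogeneous Markov chain. If $\hat T(\boldsymbol\lambda)<1$, then there exist constants $U>0$ and $\delta\in(0,1]$ such that for all states $(\tau,s)$, $$\mathbb{E}[T_2\mid T_1=\tau,S_1=s]\le U+(1-\delta)\tau,$$ and for every $\delta_1>0$ the set of states $(\tau,s)$ with $U/\tau>\delta_1$ is finite.
   Context: System model with $n$ inputs, finite state set $\mathcal{S}$, controls/actions, admissible policy class $\Pi$ satisfying Features F1 (history known), F2 (restart allowed when internal queues are empty), F3 (any sub-vector of input packets may be processed ignoring the rest), and Statistical Assumptions SA1 ($\bar T^*_s(\boldsymbol k)<\infty$), SA2 (statistics known), SA3 (markings i.i.d. per input, independent across inputs), SA4 (next state and slot outcome depend on the past only through current state and control), SA5 (a policy $\pi_h$ evacuates any $\boldsymbol k$ packets present in the system in expected time $\le C_1\sum_ik_i+C_0$), SA6 ($\bar T_s^*(\boldsymbol k)-\bar T_s^*(\boldsymbol k+\boldsymbol e_i)\le D_0<\infty$). Arrival vectors $\boldsymbol A(t)$, $t\ge1$, are i.i.d. with mean $\boldsymbol\lambda$. Evacuation times: $T_s^\pi(\boldsymbol k)$ is the time to make all of $\boldsymbol k$ input packets depart starting in state $s$ with no further arrivals; $\bar T_s^\pi=\mathbb{E}T_s^\pi$,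 $\bar T^\pi_s(\boldsymbol0)=1$; $\bar T_s^*=\inf_\pi\bar T_s^\pi$; $\bar T^*(\boldsymbol k)=\max_s\bar T_s^*(\boldsymbol k)$; $\bar T^*(\boldsymbol r)=\bar T^*(\lceil\boldsymbol r\rceil)$; $\hat T(\boldsymbol r)=\lim_t\bar T^*(t\boldsymbol r)/t$. Epoch-based policy $\pi_\epsilon$: for each $\boldsymbol k,s$ fix $\pi_{\boldsymbol k,s}\in\Pi$ with $\bar T_s^{\pi_{\boldsymbol k,s}}(\boldsymbol k)\le\bar T_s^*(\boldsymbol k)+\epsilon$. Epoch 1 starts at $t_0=0$ in state $s_0$ with $\boldsymbol A(0)$ packets, evacuated by $\pi_{\boldsymbol A(0),s_0}$ (new arrivals are held, not processed), ending at $t_1$. Epoch $m+1$ starts at $t_m$ in state $S_m$ with the $\boldsymbol k_m$ packets that arrived during epoch $m$, evacuated by $\pi_{\boldsymbol k_m,S_m}$, ending at $t_{m+1}$. *)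

theory Defs
  imports "HOL-Probability.Probability"
begin

text \<open>Packet vectors are functions ('n => nat) over a finite
index type 'n of inputs; 's is the finite state set; 'p is a type of policies, with the
admissible class Adm a subset of it.  The evacuation behaviour of policy p started in state s
with the packet vector k (no further arrivals processed) is given by
evac p s k, the joint law of (evacuation time, state at the end of the evacuation).\<close>

type_synonym ('p,'s,'n) evac_law = "'p \<Rightarrow> 's \<Rightarrow> ('n \<Rightarrow> nat) \<Rightarrow> (nat \<times> 's) pmf"

definition Tbar :: "('p,'s,'n) evac_law \<Rightarrow> 'p \<Rightarrow> 's \<Rightarrow> ('n \<Rightarrow> nat) \<Rightarrow> ennreal" where
  "Tbar evac p s k = (\<integral>\<^sup>+ x. ennreal (real (fst x)) \<partial>measure_pmf (evac p s k))"

definition Tstar :: "('p,'s,'n) evac_law \<Rightarrow> 'p set \<Rightarrow> 's \<Rightarrow> ('n \<Rightarrow> nat) \<Rightarrow> ennreal" where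
  "Tstar evac Adm s k = (INF p\<in>Adm. Tbar evac p s k)"

definition Tmax :: "('p,'s,'n) evac_law \<Rightarrow> 'p set \<Rightarrow> ('n \<Rightarrow> nat) \<Rightarrow> ennreal" where
  "Tmax evac Adm k = (SUP s. Tstar evac Adm s k)"

definition Tmax_real :: "('p,'s,'n) evac_law \<Rightarrow> 'p set \<Rightarrow> ('n \<Rightarrow> real) \<Rightarrow> ennreal" where
  "Tmax_real evac Adm r = Tmax evac Adm (\<lambda>i. nat \<lceil>r i\<rceil>)"

primrec arrivals :: "('n \<Rightarrow> nat) pmf \<Rightarrow> nat \<Rightarrow> ('n \<Rightarrow> nat) pmf" where
  "arrivals A 0 = return_pmf (\<lambda>_. 0)"
| "arrivals A (Suc t) = bind_pmf (arrivals A t) (\<lambda>k. map_pmf (\<lambda>a i. k i + a i) A)"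

definition mean_rate :: "('n \<Rightarrow> nat) pmf \<Rightarrow> 'n \<Rightarrow> real" where
  "mean_rate A i = measure_pmf.expectation A (\<lambda>a. real (a i))"

text \<open>Transition kernel of the epoch chain (T_m, S_m) under the epoch-based policy determined
by the choice pol k s = pi_{k,s}: given T_m = tau and S_m = s, the k_m packets that arrived
during epoch m are distributed as the sum of tau arrival vectors, and (T_{m+1}, S_{m+1}) is
the evacuation time / final state of pi_{k_m,s} started in s with k_m packets.\<close>
definition epoch_kernel ::
  "('n \<Rightarrow> nat) pmf \<Rightarrow> ('p,'s,'n) evac_law \<Rightarrow> (('n \<Rightarrow> nat) \<Rightarrow> 's \<Rightarrow> 'p) \<Rightarrow> nat \<times> 's \<Rightarrow> (nat \<times> 's) pmf" where
  "epoch_kernel A evac pol ts =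
     (case ts of (\<tau>, s) \<Rightarrow> bind_pmf (arrivals A \<tau>) (\<lambda>k. evac (pol k s) s k))"

text \<open>Conditional expectation E[T_{m+1} | T_m = tau, S_m = s].\<close>
definition next_epoch_mean ::
  "('n \<Rightarrow> nat) pmf \<Rightarrow> ('p,'s,'n) evac_law \<Rightarrow> (('n \<Rightarrow> nat) \<Rightarrow> 's \<Rightarrow> 'p) \<Rightarrow> nat \<Rightarrow> 's \<Rightarrow> ennreal" where
  "next_epoch_mean A evac pol \<tau> s =
     (\<integral>\<^sup>+ x. ennreal (real (fst x)) \<partial>measure_pmf (epoch_kernel A evac pol (\<tau>, s)))"

end

theory Submission
  imports Defs
begin

text \<open>
  The expected next epoch length is the expectation, over the k arrivals
  accumulated during an epoch of length tau, of the near-optimal evacuation time of k.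
  Three ingredients bound it.

  (1) Deterministic evacuation estimates: subadditivity (F2, F3, SA5) and the
      monotonicity-type bound SA6 show that Tstar at k exceeds Tmax at the rounded
      mean vector c = ceiling(tau lambda) by at most a constant plus (C1 + D0) |k - tau lambda|_1.
  (2) A law of large numbers in L1 form for i.i.d. sums (truncation plus a second-moment
      estimate): E|k_i - tau lambda_i| <= eta tau + B_i for every eta > 0.
  (3) The definition of the limit L of Tmax(t lambda)/t: Tmax(c) <= S + (L + eta) tau.

  Together they give E[T_2 | T_1 = tau, S_1 = s] <= W + (L + O(eta)) tau, and eta is chosen
  so that the slope equals 1 - (1 - L)/2 < 1.  The file follows this order.
\<close>

lemma INF_add_bound:
  fixes f :: "'a \<Rightarrow> ennreal"
  assumes "A \<noteq> {}" and "\<And>p. p \<in> A \<Longrightarrow> x \<le> f p + c"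
  shows "x \<le> (INF p\<in>A. f p) + c"
proof (rule ennreal_le_epsilon)
  fix e :: real
  assume lt: "(INF p\<in>A. f p) + c < top" and e: "0 < e"
  then obtain r where r: "(INF p\<in>A. f p) = ennreal r" "0 \<le> r"
    by (cases "INF p\<in>A. f p" rule: ennreal_cases) (auto simp: top_unique)
  then have "(INF p\<in>A. f p) < (INF p\<in>A. f p) + ennreal e"
    using e by (simp add: ennreal_plus[symmetric] ennreal_less_iff del: ennreal_plus)
  then obtain p where p: "p \<in> A" "f p < (INF p\<in>A. f p) + ennreal e"
    by (auto simp: INF_less_iff)
  have "x \<le> f p + c"
    using assms(2) p by auto
  also have "\<dots> \<le> (INF p\<in>A. f p) + ennreal e + c"
    using p by (intro add_right_mono) simp
  finally show "x \<le> (INF p\<in>A. f p) + c + ennreal e"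
    by (simp add: ac_simps)
qed

text \<open>Subadditivity of the optimal evacuation time (F2, F3 and SA5): evacuating k+l can be
  done by first evacuating k optimally and then the remaining l packets with the
  SA5 policy, which costs at most C1 |l| + C0 from any state.\<close>

lemma Tstar_add_by_bounded_policy:
  fixes evac :: "('p,'s,'n::finite) evac_law"
  assumes F2F3: "\<And>p q s k l. p \<in> Adm \<Longrightarrow> (\<And>s'. q s' \<in> Adm) \<Longrightarrow>
          \<exists>r\<in>Adm. Tbar evac r s (\<lambda>i. k i + l i)
                  \<le> Tbar evac p s k + (SUP s'. Tbar evac (q s') s' l)"
    and ph: "ph \<in> Adm"
    and phb: "\<And>s k. Tbar evac ph s k \<le> ennreal (C1 * real (\<Sum>i\<in>UNIV. k i) + C0)"
  shows "Tstar evac Adm s (\<lambda>i. k i + l i) \<le> Tstar evac Adm s k + ennreal (C1 * real (\<Sum>i\<in>UNIV. l i) + C0)"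
  unfolding Tstar_def
proof (rule INF_add_bound)
  show "Adm \<noteq> {}"
    using ph by auto
  fix p
  assume p: "p \<in> Adm"
  obtain r where r: "r \<in> Adm" "Tbar evac r s (\<lambda>i. k i + l i) \<le> Tbar evac p s k + (SUP s'. Tbar evac ph s' l)"
    using F2F3[of p "\<lambda>_. ph" s k l] p ph by auto
  have "(INF p\<in>Adm. Tbar evac p s (\<lambda>i. k i + l i)) \<le> Tbar evac r s (\<lambda>i. k i + l i)"
    using r by (auto intro: INF_lower)
  also have "\<dots> \<le> Tbar evac p s k + (SUP s'. Tbar evac ph s' l)"
    by (rule r)
  also have "\<dots> \<le> Tbar evac p s k + ennreal (C1 * real (\<Sum>i\<in>UNIV. l i) + C0)"
    by (intro add_left_mono SUP_least phb)
  finally show "(INF p\<in>Adm. Tbar evac p s (\<lambda>i. k i + l i))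
      \<le> Tbar evac p s k + ennreal (C1 * real (\<Sum>i\<in>UNIV. l i) + C0)" .
qed

lemma Tstar_add_to_coordinate:
  fixes evac :: "('p,'s,'n) evac_law"
  assumes D0: "0 \<le> D0"
    and SA6: "\<And>k i. Tstar evac Adm s k \<le> Tstar evac Adm s (k(i := k i + 1)) + ennreal D0"
  shows "Tstar evac Adm s k \<le> Tstar evac Adm s (k(i := k i + m)) + ennreal (D0 * real m)"
proof (induction m)
  case 0
  then show ?case by simp
next
  case (Suc m)
  have "Tstar evac Adm s k \<le> Tstar evac Adm s (k(i := k i + m)) + ennreal (D0 * real m)"
    by (rule Suc.IH)
  also have "\<dots> \<le> Tstar evac Adm s (k(i := k i + Suc m)) + ennreal D0 + ennreal (D0 * real m)"
    using SA6[of "k(i := k i + m)" i] by (intro add_right_mono) simp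
  also have "\<dots> = Tstar evac Adm s (k(i := k i + Suc m)) + ennreal (D0 * real (Suc m))"
    using D0 by (simp add: add.assoc ennreal_plus[symmetric] algebra_simps del: ennreal_plus)
  finally show ?case .
qed

lemma Tstar_add_vector:
  fixes evac :: "('p,'s,'n::finite) evac_law"
  assumes D0: "0 \<le> D0"
    and SA6: "\<And>k i. Tstar evac Adm s k \<le> Tstar evac Adm s (k(i := k i + 1)) + ennreal D0"
  shows "Tstar evac Adm s k \<le> Tstar evac Adm s (\<lambda>i. k i + d i) + ennreal (D0 * real (\<Sum>i\<in>UNIV. d i))"
proof -
  have "Tstar evac Adm s k \<le> Tstar evac Adm s (\<lambda>i. k i + (if i \<in> F then d i else 0))
          + ennreal (D0 * real (\<Sum>i\<in>F. d i))" if "finite F" for F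
    using that
  proof (induction F arbitrary: k rule: finite_induct)
    case empty
    then show ?case by simp
  next
    case (insert j F)
    define k' where "k' = k(j := k j + d j)"
    have shift: "(\<lambda>i. k' i + (if i \<in> F then d i else 0)) = (\<lambda>i. k i + (if i \<in> insert j F then d i else 0))"
      using insert.hyps(2) by (auto simp: k'_def fun_eq_iff)
    have "Tstar evac Adm s k \<le> Tstar evac Adm s k' + ennreal (D0 * real (d j))"
      unfolding k'_def by (rule Tstar_add_to_coordinate[OF D0 SA6])
    also have "\<dots> \<le> Tstar evac Adm s (\<lambda>i. k i + (if i \<in> insert j F then d i else 0))
          + ennreal (D0 * real (\<Sum>i\<in>F. d i)) + ennreal (D0 * real (d j))"
      using insert.IH[of k'] unfolding shift by (rule add_right_mono)
    also have "\<dots> = Tstar evac Adm s (\<lambda>i. k i + (if i \<in> insert j F then d i else 0))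
          + ennreal (D0 * real (\<Sum>i\<in>insert j F. d i))"
      using insert.hyps D0
      by (simp add: add.assoc ennreal_plus[symmetric] algebra_simps del: ennreal_plus of_nat_sum)
    finally show ?case .
  qed
  from this[of UNIV] show ?thesis
    by simp
qed

lemma Tmax_finite:
  fixes evac :: "('p,'s::finite,'n) evac_law"
  assumes "\<And>s. Tstar evac Adm s k < \<top>"
  shows "Tmax evac Adm k < \<top>"
proof -
  have "Tmax evac Adm k = Max (range (\<lambda>s. Tstar evac Adm s k))"
    unfolding Tmax_def by (rule cSup_eq_Max) auto
  also have "\<dots> \<in> range (\<lambda>s. Tstar evac Adm s k)"
    by (rule Max_in) auto
  finally show ?thesis
    using assms by auto
qed

lemma ceiling_rounding_gaps:
  fixes x :: "'n::finite \<Rightarrow> real" and k :: "'n \<Rightarrow> nat"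
  assumes x0: "\<And>i. 0 \<le> x i"
  shows "real (\<Sum>i\<in>UNIV. k i - nat \<lceil>x i\<rceil>) \<le> (\<Sum>i\<in>UNIV. \<bar>real (k i) - x i\<bar>)"
    and "real (\<Sum>i\<in>UNIV. nat \<lceil>x i\<rceil> - k i) \<le> (\<Sum>i\<in>UNIV. \<bar>real (k i) - x i\<bar>) + real CARD('n)"
proof -
  have above: "x i \<le> real (nat \<lceil>x i\<rceil>)" and below: "real (nat \<lceil>x i\<rceil>) \<le> x i + 1" for i
    using x0[of i] by (simp_all add: real_nat_ceiling_ge of_nat_nat)
  have "real (k i - nat \<lceil>x i\<rceil>) \<le> \<bar>real (k i) - x i\<bar>" for i
    using above[of i] by (cases "k i \<le> nat \<lceil>x i\<rceil>") (auto simp: of_nat_diff)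
  then show "real (\<Sum>i\<in>UNIV. k i - nat \<lceil>x i\<rceil>) \<le> (\<Sum>i\<in>UNIV. \<bar>real (k i) - x i\<bar>)"
    unfolding of_nat_sum by (rule sum_mono)
  have "real (nat \<lceil>x i\<rceil> - k i) \<le> \<bar>real (k i) - x i\<bar> + 1" for i
    using below[of i] by (cases "k i \<le> nat \<lceil>x i\<rceil>") (auto simp: of_nat_diff)
  then have "(\<Sum>i\<in>UNIV. real (nat \<lceil>x i\<rceil> - k i)) \<le> (\<Sum>i\<in>UNIV. \<bar>real (k i) - x i\<bar> + 1)"
    by (rule sum_mono)
  then show "real (\<Sum>i\<in>UNIV. nat \<lceil>x i\<rceil> - k i) \<le> (\<Sum>i\<in>UNIV. \<bar>real (k i) - x i\<bar>) + real CARD('n)"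
    by (simp add: sum.distrib)
qed

text \<open>Pass from k to the common upper bound max(k, ceiling x): missing packets are charged by
  SA6, excess packets by subadditivity.\<close>

lemma Tstar_deviation_bound:
  fixes evac :: "('p,'s::finite,'n::finite) evac_law"
  assumes sub: "\<And>k l. Tstar evac Adm s (\<lambda>i. k i + l i)
                  \<le> Tstar evac Adm s k + ennreal (C1 * real (\<Sum>i\<in>UNIV. l i) + C0)"
    and mono: "\<And>k d. Tstar evac Adm s k
                  \<le> Tstar evac Adm s (\<lambda>i. k i + d i) + ennreal (D0 * real (\<Sum>i\<in>UNIV. d i))"
    and C0: "0 \<le> C0" and C1: "0 \<le> C1" and D0: "0 \<le> D0"
    and SA1: "\<And>s k. Tstar evac Adm s k < \<top>"
    and x0: "\<And>i. 0 \<le> x i"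
  shows "Tstar evac Adm s k \<le> ennreal (enn2real (Tmax_real evac Adm x) + C0 + D0 * real CARD('n)
            + (C1 + D0) * (\<Sum>i\<in>UNIV. \<bar>real (k i) - x i\<bar>))"
proof -
  define c where "c = (\<lambda>i. nat \<lceil>x i\<rceil>)"
  define d where "d i = c i - k i" for i
  define l where "l i = k i - c i" for i
  define T where "T = enn2real (Tmax_real evac Adm x)"
  have T0: "0 \<le> T"
    by (simp add: T_def)
  have Tc: "Tstar evac Adm s c \<le> ennreal T"
  proof -
    have "Tstar evac Adm s c \<le> Tmax evac Adm c"
      unfolding Tmax_def by (rule SUP_upper) auto
    also have "\<dots> = ennreal T"
      using Tmax_finite[OF SA1] by (simp add: T_def Tmax_real_def c_def)
    finally show ?thesis .
  qed
  have meet: "(\<lambda>i. k i + d i) = (\<lambda>i. c i + l i)"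
    by (auto simp: d_def l_def fun_eq_iff)
  have "Tstar evac Adm s k \<le> Tstar evac Adm s (\<lambda>i. c i + l i) + ennreal (D0 * real (\<Sum>i\<in>UNIV. d i))"
    using mono[of k d] unfolding meet .
  also have "\<dots> \<le> ennreal T + ennreal (C1 * real (\<Sum>i\<in>UNIV. l i) + C0)
                   + ennreal (D0 * real (\<Sum>i\<in>UNIV. d i))"
    using order_trans[OF sub[of c l] add_right_mono[OF Tc]] by (rule add_right_mono)
  also have "\<dots> = ennreal (T + (C1 * real (\<Sum>i\<in>UNIV. l i) + C0) + D0 * real (\<Sum>i\<in>UNIV. d i))"
    using T0 C0 C1 D0 by (simp add: ennreal_plus del: of_nat_sum)
  also have "\<dots> \<le> ennreal (T + C0 + D0 * real CARD('n) + (C1 + D0) * (\<Sum>i\<in>UNIV. \<bar>real (k i) - x i\<bar>))"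
  proof (rule ennreal_leI)
    have "C1 * real (\<Sum>i\<in>UNIV. l i) \<le> C1 * (\<Sum>i\<in>UNIV. \<bar>real (k i) - x i\<bar>)"
      using C1 ceiling_rounding_gaps(1)[of x k, OF x0] by (simp add: l_def c_def mult_left_mono del: of_nat_sum)
    moreover have "D0 * real (\<Sum>i\<in>UNIV. d i) \<le> D0 * ((\<Sum>i\<in>UNIV. \<bar>real (k i) - x i\<bar>) + real CARD('n))"
      using D0 ceiling_rounding_gaps(2)[of x k, OF x0] by (simp add: d_def c_def mult_left_mono del: of_nat_sum)
    ultimately show "T + (C1 * real (\<Sum>i\<in>UNIV. l i) + C0) + D0 * real (\<Sum>i\<in>UNIV. d i)
        \<le> T + C0 + D0 * real CARD('n) + (C1 + D0) * (\<Sum>i\<in>UNIV. \<bar>real (k i) - x i\<bar>)"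
      by (simp add: algebra_simps)
  qed
  finally show ?thesis
    unfolding T_def .
qed

primrec samples :: "'a pmf \<Rightarrow> nat \<Rightarrow> 'a list pmf" where
  "samples X 0 = return_pmf []"
| "samples X (Suc t) = bind_pmf (samples X t) (\<lambda>xs. map_pmf (\<lambda>x. x # xs) X)"

lemma samples_length: "xs \<in> set_pmf (samples X t) \<Longrightarrow> length xs = t"
  by (induction t arbitrary: xs) auto

lemma nn_integral_affine_pmf:
  fixes Q :: "'a \<Rightarrow> real"
  assumes "0 \<le> a" "0 \<le> b" "\<And>x. 0 \<le> Q x"
  shows "(\<integral>\<^sup>+ x. ennreal (a * Q x + b) \<partial>measure_pmf M)
         = ennreal a * (\<integral>\<^sup>+ x. ennreal (Q x) \<partial>measure_pmf M) + ennreal b"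
proof -
  have "(\<integral>\<^sup>+ x. ennreal (a * Q x + b) \<partial>measure_pmf M)
      = (\<integral>\<^sup>+ x. ennreal a * ennreal (Q x) + ennreal b \<partial>measure_pmf M)"
    using assms by (intro nn_integral_cong) (simp add: ennreal_plus ennreal_mult)
  also have "\<dots> = ennreal a * (\<integral>\<^sup>+ x. ennreal (Q x) \<partial>measure_pmf M) + ennreal b"
    by (simp add: nn_integral_add nn_integral_cmult measure_pmf.emeasure_space_1)
  finally show ?thesis .
qed

lemma samples_sum_nn_integral:
  fixes h :: "'a \<Rightarrow> real"
  assumes h0: "\<And>x. 0 \<le> h x"
    and e: "(\<integral>\<^sup>+ x. ennreal (h x) \<partial>measure_pmf X) = ennreal e" and e0: "0 \<le> e"
  shows "(\<integral>\<^sup>+ xs. ennreal (sum_list (map h xs)) \<partial>measure_pmf (samples X t)) = ennreal (real t * e)"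
proof (induction t)
  case 0
  then show ?case by simp
next
  case (Suc t)
  have nn: "0 \<le> sum_list (map h xs)" for xs
    by (rule sum_list_nonneg) (auto intro: h0)
  have "(\<integral>\<^sup>+ xs. ennreal (sum_list (map h xs)) \<partial>measure_pmf (samples X (Suc t)))
     = \<integral>\<^sup>+ xs. (\<integral>\<^sup>+ x. ennreal (h x) + ennreal (sum_list (map h xs)) \<partial>measure_pmf X) \<partial>measure_pmf (samples X t)"
    using h0 nn by (simp add: nn_integral_bind_pmf nn_integral_map_pmf ennreal_plus)
  also have "\<dots> = \<integral>\<^sup>+ xs. (ennreal e + ennreal (sum_list (map h xs))) \<partial>measure_pmf (samples X t)"
    by (subst nn_integral_add) (auto simp: e measure_pmf.emeasure_space_1)
  also have "\<dots> = ennreal e + ennreal (real t * e)"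
    by (subst nn_integral_add) (auto simp: Suc measure_pmf.emeasure_space_1)
  also have "\<dots> = ennreal (real (Suc t) * e)"
    using e0 by (simp add: ennreal_plus[symmetric] algebra_simps del: ennreal_plus)
  finally show ?case .
qed

lemma samples_sum_second_moment:
  fixes g :: "'a \<Rightarrow> real"
  assumes gb: "\<And>x. \<bar>g x\<bar> \<le> C" and g0: "measure_pmf.expectation X g = 0"
  shows "(\<integral>\<^sup>+ xs. ennreal ((sum_list (map g xs))\<^sup>2) \<partial>measure_pmf (samples X t))
         = ennreal (real t * measure_pmf.expectation X (\<lambda>x. (g x)\<^sup>2))"
proof (induction t)
  case 0
  then show ?case by simp
next
  case (Suc t)
  define V where "V = measure_pmf.expectation X (\<lambda>x. (g x)\<^sup>2)"
  have V0: "0 \<le> V" unfolding V_def by simp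
  have ig: "integrable (measure_pmf X) g"
    by (rule measure_pmf.integrable_const_bound[where B=C]) (auto simp: gb)
  have "(g x)\<^sup>2 \<le> C\<^sup>2" for x
    using power_mono[OF gb[of x] abs_ge_zero, of 2] by simp
  then have ig2: "integrable (measure_pmf X) (\<lambda>x. (g x)\<^sup>2)"
    by (intro measure_pmf.integrable_const_bound[where B="C\<^sup>2"]) auto
  have step: "(\<integral>\<^sup>+ x. ennreal ((g x + S)\<^sup>2) \<partial>measure_pmf X) = ennreal (S\<^sup>2 + V)" for S
  proof -
    have sq: "(\<lambda>x. (g x + S)\<^sup>2) = (\<lambda>x. (g x)\<^sup>2 + 2 * S * g x + S\<^sup>2)"
      by (auto simp: power2_eq_square algebra_simps)
    have "measure_pmf.expectation X (\<lambda>x. (g x + S)\<^sup>2) = S\<^sup>2 + V"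
      unfolding sq V_def using ig ig2 g0 by simp
    moreover have "integrable (measure_pmf X) (\<lambda>x. (g x + S)\<^sup>2)"
      unfolding sq using ig ig2 by auto
    ultimately show ?thesis by (simp add: nn_integral_eq_integral)
  qed
  have "(\<integral>\<^sup>+ xs. ennreal ((sum_list (map g xs))\<^sup>2) \<partial>measure_pmf (samples X (Suc t)))
     = \<integral>\<^sup>+ xs. ennreal ((sum_list (map g xs))\<^sup>2) + ennreal V \<partial>measure_pmf (samples X t)"
    using V0 by (simp add: nn_integral_bind_pmf nn_integral_map_pmf step ennreal_plus)
  also have "\<dots> = ennreal (real t * V) + ennreal V"
    by (subst nn_integral_add) (auto simp: Suc[folded V_def] measure_pmf.emeasure_space_1)
  also have "\<dots> = ennreal (real (Suc t) * V)"
    using V0 by (simp add: ennreal_plus[symmetric] algebra_simps del: ennreal_plus)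
  finally show ?case unfolding V_def .
qed

text \<open>Elementary AM-GM estimate turning a second-moment bound into a first-moment bound.\<close>

lemma abs_le_quadratic:
  fixes y c :: real
  assumes "0 < c"
  shows "\<bar>y\<bar> \<le> y\<^sup>2 / (2 * c) + c / 2"
proof -
  have "0 \<le> (\<bar>y\<bar> - c)\<^sup>2" by simp
  then have "2 * c * \<bar>y\<bar> \<le> y\<^sup>2 + c\<^sup>2" by (simp add: power2_eq_square algebra_simps)
  then show ?thesis using assms by (simp add: field_simps power2_eq_square)
qed

lemma samples_abs_deviation_bounded:
  fixes g :: "'a \<Rightarrow> real"
  assumes gb: "\<And>x. \<bar>g x\<bar> \<le> C" and c: "0 < c"
  shows "(\<integral>\<^sup>+ xs. ennreal \<bar>sum_list (map g xs) - real t * measure_pmf.expectation X g\<bar> \<partial>measure_pmf (samples X t))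
         \<le> ennreal (real t * measure_pmf.variance X g / (2 * c) + c / 2)"
proof -
  define \<mu> where "\<mu> = measure_pmf.expectation X g"
  define g' where "g' x = g x - \<mu>" for x
  have ig: "integrable (measure_pmf X) g"
    by (rule measure_pmf.integrable_const_bound[where B=C]) (auto simp: gb)
  have "g x \<le> C" "-C \<le> g x" for x
    using gb[of x] by linarith+
  then have "\<mu> \<le> C" "-C \<le> \<mu>"
    unfolding \<mu>_def
    by (auto intro!: measure_pmf.integral_le_const measure_pmf.integral_ge_const AE_I2 ig)
  then have g'b: "\<bar>g' x\<bar> \<le> 2 * C" for x
    using gb[of x] by (auto simp: g'_def abs_le_iff)
  have g'0: "measure_pmf.expectation X g' = 0"
    unfolding g'_def \<mu>_def using ig by (simp add: measure_pmf.prob_space)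
  have centered: "sum_list (map g xs) - real t * \<mu> = sum_list (map g' xs)"
    if "xs \<in> set_pmf (samples X t)" for xs
    using samples_length[OF that] by (induction xs arbitrary: t) (auto simp: g'_def algebra_simps)
  have pointwise: "ennreal \<bar>sum_list (map g xs) - real t * \<mu>\<bar>
      \<le> ennreal (1 / (2 * c) * (sum_list (map g' xs))\<^sup>2 + c / 2)"
    if "xs \<in> set_pmf (samples X t)" for xs
    using abs_le_quadratic[OF c, of "sum_list (map g' xs)"]
    by (intro ennreal_leI) (simp add: centered[OF that])
  have "(\<integral>\<^sup>+ xs. ennreal \<bar>sum_list (map g xs) - real t * \<mu>\<bar> \<partial>measure_pmf (samples X t))
      \<le> (\<integral>\<^sup>+ xs. ennreal (1 / (2 * c) * (sum_list (map g' xs))\<^sup>2 + c / 2) \<partial>measure_pmf (samples X t))"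
    by (intro nn_integral_mono_AE AE_pmfI pointwise)
  also have "\<dots> = ennreal (1 / (2 * c)) * ennreal (real t * measure_pmf.variance X g) + ennreal (c / 2)"
    using c by (subst nn_integral_affine_pmf)
      (simp_all add: samples_sum_second_moment[OF g'b g'0] g'_def \<mu>_def)
  also have "\<dots> = ennreal (real t * measure_pmf.variance X g / (2 * c) + c / 2)"
    using c by (simp add: ennreal_mult[symmetric] ennreal_plus[symmetric] del: ennreal_plus)
  finally show ?thesis unfolding \<mu>_def .
qed

lemma truncation_tail_small:
  fixes f :: "'a \<Rightarrow> real"
  assumes f0: "\<And>x. 0 \<le> f x" and fi: "integrable (measure_pmf X) f" and eta: "0 < \<eta>"
  shows "\<exists>M::nat. measure_pmf.expectation X (\<lambda>x. f x - min (f x) (real M)) < \<eta>"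
proof -
  have "(\<lambda>M::nat. measure_pmf.expectation X (\<lambda>x. f x - min (f x) (real M)))
        \<longlonglongrightarrow> measure_pmf.expectation X (\<lambda>x. 0)"
  proof (rule integral_dominated_convergence[where w=f])
    show "AE x in measure_pmf X. (\<lambda>M. f x - min (f x) (real M)) \<longlonglongrightarrow> 0"
    proof (rule AE_I2)
      fix x
      have "\<forall>\<^sub>F M in sequentially. f x - min (f x) (real M) = 0"
        unfolding eventually_sequentially
        by (rule exI[of _ "nat \<lceil>f x\<rceil>"]) (auto simp: min_def intro: order.trans[OF real_nat_ceiling_ge])
      then show "(\<lambda>M. f x - min (f x) (real M)) \<longlonglongrightarrow> 0"
        by (rule tendsto_eventually)
    qed
    show "AE x in measure_pmf X. norm (f x - min (f x) (real M)) \<le> f x" for M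
      by (rule AE_I2) (auto simp: f0 min_def)
  qed (use fi in auto)
  then have "\<forall>\<^sub>F M in sequentially. measure_pmf.expectation X (\<lambda>x. f x - min (f x) (real M)) < \<eta>"
    using eta by (intro order_tendstoD(2)) auto
  then show ?thesis
    by (auto simp: eventually_sequentially)
qed

lemma samples_abs_deviation_add_nonneg:
  fixes g h :: "'a \<Rightarrow> real"
  assumes h0: "\<And>x. 0 \<le> h x"
    and ig: "integrable (measure_pmf X) g" and ih: "integrable (measure_pmf X) h"
  shows "(\<integral>\<^sup>+ xs. ennreal \<bar>sum_list (map (\<lambda>x. g x + h x) xs)
                        - real t * measure_pmf.expectation X (\<lambda>x. g x + h x)\<bar> \<partial>measure_pmf (samples X t))
         \<le> (\<integral>\<^sup>+ xs. ennreal \<bar>sum_list (map g xs) - real t * measure_pmf.expectation X g\<bar>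
                  \<partial>measure_pmf (samples X t)) + ennreal (2 * real t * measure_pmf.expectation X h)"
proof -
  define e where "e = measure_pmf.expectation X h"
  have e0: "0 \<le> e"
    using h0 by (simp add: e_def)
  then have te: "0 \<le> real t * e"
    by simp
  have h_mean: "(\<integral>\<^sup>+ x. ennreal (h x) \<partial>measure_pmf X) = ennreal e"
    unfolding e_def by (rule nn_integral_eq_integral[OF ih]) (simp add: h0)
  have pointwise: "ennreal \<bar>sum_list (map (\<lambda>x. g x + h x) xs)
                          - real t * measure_pmf.expectation X (\<lambda>x. g x + h x)\<bar>
      \<le> ennreal \<bar>sum_list (map g xs) - real t * measure_pmf.expectation X g\<bar>
          + ennreal (sum_list (map h xs)) + ennreal (real t * e)" for xs
  proof -
    have hs: "0 \<le> sum_list (map h xs)"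
      by (rule sum_list_nonneg) (auto intro: h0)
    have "\<bar>sum_list (map (\<lambda>x. g x + h x) xs) - real t * measure_pmf.expectation X (\<lambda>x. g x + h x)\<bar>
        \<le> \<bar>sum_list (map g xs) - real t * measure_pmf.expectation X g\<bar> + sum_list (map h xs) + real t * e"
      using hs te ig ih by (simp add: sum_list_addf e_def abs_le_iff algebra_simps) linarith
    then show ?thesis
      using hs te by (simp add: ennreal_plus[symmetric] ennreal_leI del: ennreal_plus)
  qed
  have "(\<integral>\<^sup>+ xs. ennreal \<bar>sum_list (map (\<lambda>x. g x + h x) xs)
                       - real t * measure_pmf.expectation X (\<lambda>x. g x + h x)\<bar> \<partial>measure_pmf (samples X t))
      \<le> (\<integral>\<^sup>+ xs. ennreal \<bar>sum_list (map g xs) - real t * measure_pmf.expectation X g\<bar>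
               + ennreal (sum_list (map h xs)) + ennreal (real t * e) \<partial>measure_pmf (samples X t))"
    by (intro nn_integral_mono pointwise)
  also have "\<dots> = (\<integral>\<^sup>+ xs. ennreal \<bar>sum_list (map g xs) - real t * measure_pmf.expectation X g\<bar>
               \<partial>measure_pmf (samples X t)) + ennreal (real t * e) + ennreal (real t * e)"
    using te by (simp add: nn_integral_add measure_pmf.emeasure_space_1
        samples_sum_nn_integral[OF h0 h_mean e0])
  also have "\<dots> = (\<integral>\<^sup>+ xs. ennreal \<bar>sum_list (map g xs) - real t * measure_pmf.expectation X g\<bar>
               \<partial>measure_pmf (samples X t)) + ennreal (2 * real t * e)"
    using te by (simp add: add.assoc ennreal_plus[symmetric] algebra_simps del: ennreal_plus)
  finally show ?thesis
    unfolding e_def .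
qed

text \<open>Weak law of large numbers in L1 form, with an explicit linear bound:
  E|S_t - t mu| <= eta t + B for every eta > 0.  Split f into a bounded part, handled by
  the second-moment estimate with c proportional to t+1, and a tail of small mean.\<close>

lemma samples_abs_deviation:
  fixes f :: "'a \<Rightarrow> real"
  assumes f0: "\<And>x. 0 \<le> f x" and fi: "integrable (measure_pmf X) f" and eta: "0 < \<eta>"
  shows "\<exists>B\<ge>0. \<forall>t. (\<integral>\<^sup>+ xs. ennreal \<bar>sum_list (map f xs) - real t * measure_pmf.expectation X f\<bar>
                                \<partial>measure_pmf (samples X t)) \<le> ennreal (\<eta> * real t + B)"
proof -
  obtain M :: nat where M: "measure_pmf.expectation X (\<lambda>x. f x - min (f x) (real M)) < \<eta> / 4"
    using truncation_tail_small[OF f0 fi, of "\<eta> / 4"] eta by auto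
  define g where "g = (\<lambda>x. min (f x) (real M))"
  define h where "h = (\<lambda>x. f x - g x)"
  define e where "e = measure_pmf.expectation X h"
  define V where "V = measure_pmf.variance X g"
  have gb: "\<bar>g x\<bar> \<le> real M" for x
    using f0[of x] by (auto simp: g_def)
  have f_split: "f = (\<lambda>x. g x + h x)"
    by (simp add: h_def)
  have e0: "0 \<le> e" and e_small: "e < \<eta> / 4"
    using M by (simp_all add: e_def h_def g_def)
  have V0: "0 \<le> V"
    by (simp add: V_def)
  have "(\<integral>\<^sup>+ xs. ennreal \<bar>sum_list (map f xs) - real t * measure_pmf.expectation X f\<bar>
            \<partial>measure_pmf (samples X t)) \<le> ennreal (\<eta> * real t + (V / \<eta> + \<eta>))" for t
  proof -
    define c where "c = \<eta> * (real t + 1) / 2"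
    have c0: "0 < c"
      using eta by (simp add: c_def)
    have "real t * V \<le> (real t + 1) * V"
      using V0 by (simp add: mult_right_mono)
    also have "\<dots> = V / \<eta> * (2 * c)"
      using eta by (simp add: c_def)
    finally have "real t * V / (2 * c) \<le> V / \<eta>"
      using c0 by (simp add: pos_divide_le_eq)
    moreover have "2 * real t * e \<le> \<eta> * real t / 2"
      using mult_left_mono[OF less_imp_le[OF e_small], of "2 * real t"] by simp
    moreover have "c / 2 = \<eta> * real t / 4 + \<eta> / 4"
      by (simp add: c_def algebra_simps)
    moreover have "0 \<le> \<eta> * real t"
      using eta by simp
    ultimately have arith: "real t * V / (2 * c) + c / 2 + 2 * real t * e \<le> \<eta> * real t + (V / \<eta> + \<eta>)"
      using eta by linarith
    have "(\<integral>\<^sup>+ xs. ennreal \<bar>sum_list (map f xs) - real t * measure_pmf.expectation X f\<bar>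
            \<partial>measure_pmf (samples X t))
        \<le> (\<integral>\<^sup>+ xs. ennreal \<bar>sum_list (map g xs) - real t * measure_pmf.expectation X g\<bar>
               \<partial>measure_pmf (samples X t)) + ennreal (2 * real t * e)"
      unfolding f_split e_def
    proof (rule samples_abs_deviation_add_nonneg)
      show "integrable (measure_pmf X) g"
        by (rule measure_pmf.integrable_const_bound[where B="real M"]) (auto simp: gb)
      show "integrable (measure_pmf X) h"
        by (rule Bochner_Integration.integrable_bound[OF fi]) (auto simp: h_def g_def f0 min_def)
    qed (simp add: h_def g_def)
    also have "\<dots> \<le> ennreal (real t * V / (2 * c) + c / 2) + ennreal (2 * real t * e)"
      unfolding V_def by (intro add_right_mono samples_abs_deviation_bounded[OF gb c0])
    also have "\<dots> = ennreal (real t * V / (2 * c) + c / 2 + 2 * real t * e)"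
      using c0 V0 e0 by (simp add: ennreal_plus[symmetric] del: ennreal_plus)
    also have "\<dots> \<le> ennreal (\<eta> * real t + (V / \<eta> + \<eta>))"
      using arith by (rule ennreal_leI)
    finally show ?thesis .
  qed
  then show ?thesis
    using V0 eta by (intro exI[of _ "V / \<eta> + \<eta>"]) auto
qed

lemma arrivals_coordinate:
  "map_pmf (\<lambda>k. real (k i)) (arrivals A t)
     = map_pmf (\<lambda>xs. sum_list (map (\<lambda>a. real (a i)) xs)) (samples A t)"
proof (induction t)
  case 0
  then show ?case by simp
next
  case (Suc t)
  define N where "N = (\<lambda>y::real. map_pmf (\<lambda>a. y + real (a i)) A)"
  have "map_pmf (\<lambda>k. real (k i)) (arrivals A (Suc t)) = bind_pmf (arrivals A t) (\<lambda>k. N (real (k i)))"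
    by (simp add: map_bind_pmf pmf.map_comp o_def N_def)
  also have "\<dots> = bind_pmf (map_pmf (\<lambda>k. real (k i)) (arrivals A t)) N"
    by (simp add: bind_map_pmf)
  also have "\<dots> = bind_pmf (samples A t) (\<lambda>xs. N (sum_list (map (\<lambda>a. real (a i)) xs)))"
    by (simp add: Suc bind_map_pmf)
  also have "\<dots> = map_pmf (\<lambda>xs. sum_list (map (\<lambda>a. real (a i)) xs)) (samples A (Suc t))"
    by (simp add: map_bind_pmf pmf.map_comp o_def N_def add.commute)
  finally show ?case .
qed

lemma arrivals_abs_deviation:
  fixes A :: "('n \<Rightarrow> nat) pmf"
  assumes "integrable (measure_pmf A) (\<lambda>a. real (a i))" and "0 < \<eta>"
  shows "\<exists>B\<ge>0. \<forall>t. (\<integral>\<^sup>+ k. ennreal \<bar>real (k i) - real t * mean_rate A i\<bar> \<partial>measure_pmf (arrivals A t))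
                      \<le> ennreal (\<eta> * real t + B)"
proof -
  have "(\<integral>\<^sup>+ k. ennreal \<bar>real (k i) - r\<bar> \<partial>measure_pmf (arrivals A t))
      = (\<integral>\<^sup>+ xs. ennreal \<bar>sum_list (map (\<lambda>a. real (a i)) xs) - r\<bar> \<partial>measure_pmf (samples A t))" for t r
  proof -
    have "(\<integral>\<^sup>+ k. ennreal \<bar>real (k i) - r\<bar> \<partial>measure_pmf (arrivals A t))
        = (\<integral>\<^sup>+ y. ennreal \<bar>y - r\<bar> \<partial>measure_pmf (map_pmf (\<lambda>k. real (k i)) (arrivals A t)))"
      by (simp add: nn_integral_map_pmf)
    also have "\<dots> = (\<integral>\<^sup>+ xs. ennreal \<bar>sum_list (map (\<lambda>a. real (a i)) xs) - r\<bar> \<partial>measure_pmf (samples A t))"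
      by (simp add: arrivals_coordinate nn_integral_map_pmf)
    finally show ?thesis .
  qed
  then show ?thesis
    using samples_abs_deviation[of "\<lambda>a. real (a i)" A \<eta>] assms by (simp add: mean_rate_def)
qed

lemma next_epoch_mean_le_deviation:
  fixes A :: "('n::finite \<Rightarrow> nat) pmf" and evac :: "('p,'s,'n) evac_law"
  assumes pw: "\<And>k. Tstar evac Adm s k \<le> ennreal (a + K * (\<Sum>i\<in>UNIV. \<bar>real (k i) - x i\<bar>))"
    and pol_eps: "\<And>k. Tbar evac (pol k s) s k \<le> Tstar evac Adm s k + ennreal \<epsilon>"
    and a: "0 \<le> a" and K: "0 \<le> K" and eps: "0 \<le> \<epsilon>"
  shows "next_epoch_mean A evac pol \<tau> s
           \<le> ennreal (a + \<epsilon>) + ennreal K *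
               (\<Sum>i\<in>UNIV. \<integral>\<^sup>+ k. ennreal \<bar>real (k i) - x i\<bar> \<partial>measure_pmf (arrivals A \<tau>))"
proof -
  have bound: "Tbar evac (pol k s) s k
      \<le> ennreal (a + \<epsilon>) + ennreal K * (\<Sum>i\<in>UNIV. ennreal \<bar>real (k i) - x i\<bar>)" for k
  proof -
    have "Tbar evac (pol k s) s k \<le> ennreal (a + K * (\<Sum>i\<in>UNIV. \<bar>real (k i) - x i\<bar>)) + ennreal \<epsilon>"
      using pol_eps[of k] add_right_mono[OF pw[of k]] by (rule order_trans)
    also have "\<dots> = ennreal (a + \<epsilon>) + ennreal K * (\<Sum>i\<in>UNIV. ennreal \<bar>real (k i) - x i\<bar>)"
      using a K eps
      by (simp add: sum_ennreal ennreal_mult[symmetric] ennreal_plus[symmetric] sum_nonneg ac_simps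
          del: ennreal_plus)
    finally show ?thesis .
  qed
  have "next_epoch_mean A evac pol \<tau> s = (\<integral>\<^sup>+ k. Tbar evac (pol k s) s k \<partial>measure_pmf (arrivals A \<tau>))"
    by (simp add: next_epoch_mean_def epoch_kernel_def nn_integral_bind_pmf Tbar_def)
  also have "\<dots> \<le> (\<integral>\<^sup>+ k. ennreal (a + \<epsilon>) + ennreal K * (\<Sum>i\<in>UNIV. ennreal \<bar>real (k i) - x i\<bar>)
                    \<partial>measure_pmf (arrivals A \<tau>))"
    by (intro nn_integral_mono bound)
  also have "\<dots> = ennreal (a + \<epsilon>) + ennreal K *
               (\<Sum>i\<in>UNIV. \<integral>\<^sup>+ k. ennreal \<bar>real (k i) - x i\<bar> \<partial>measure_pmf (arrivals A \<tau>))"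
    by (simp add: nn_integral_add nn_integral_cmult nn_integral_sum measure_pmf.emeasure_space_1
        del: sum_ennreal)
  finally show ?thesis .
qed

lemma linear_bound_of_ratio_limit:
  fixes f :: "nat \<Rightarrow> real"
  assumes lim: "(\<lambda>t. f t / real t) \<longlonglongrightarrow> L" and eta: "0 < \<eta>"
  shows "\<exists>S\<ge>0. \<forall>t. f t \<le> S + (L + \<eta>) * real t"
proof -
  obtain N where N: "\<And>t. N \<le> t \<Longrightarrow> f t / real t < L + \<eta>"
    using order_tendstoD(2)[OF lim, of "L + \<eta>"] eta by (auto simp: eventually_sequentially)
  define S where "S = (\<Sum>t\<le>N. \<bar>f t - (L + \<eta>) * real t\<bar>)"
  have S0: "0 \<le> S"
    by (simp add: S_def sum_nonneg)
  have "f t \<le> S + (L + \<eta>) * real t" for t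
  proof (cases "t \<le> N")
    case True
    have "\<bar>f t - (L + \<eta>) * real t\<bar> \<le> S"
      unfolding S_def by (rule member_le_sum) (use True in auto)
    then show ?thesis by linarith
  next
    case False
    then have "f t < (L + \<eta>) * real t"
      using N[of t] by (simp add: pos_divide_less_eq)
    then show ?thesis
      using S0 by linarith
  qed
  then show ?thesis
    using S0 by blast
qed

lemma finite_ratio_superlevel:
  fixes U \<delta>1 :: real
  assumes d1: "0 < \<delta>1"
  shows "finite {(\<tau>, s::'s::finite). 1 \<le> \<tau> \<and> U / real \<tau> > \<delta>1}"
proof (rule finite_subset)
  show "{(\<tau>, s::'s). 1 \<le> \<tau> \<and> U / real \<tau> > \<delta>1} \<subseteq> {..nat \<lceil>U / \<delta>1\<rceil>} \<times> UNIV"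
  proof
    fix p
    assume "p \<in> {(\<tau>, s::'s). 1 \<le> \<tau> \<and> U / real \<tau> > \<delta>1}"
    then obtain \<tau> s where p: "p = (\<tau>, s)" and "1 \<le> \<tau>" and "\<delta>1 < U / real \<tau>"
      by auto
    then have "real \<tau> < U / \<delta>1"
      using d1 by (simp add: pos_less_divide_eq mult.commute)
    then show "p \<in> {..nat \<lceil>U / \<delta>1\<rceil>} \<times> UNIV"
      unfolding p by simp linarith
  qed
qed simp

text \<open>Combine the deviation
  bound around the target x = tau lambda, the L1 law of large numbers for the arrivals
  and the asymptotic slope L of the optimal evacuation time.\<close>

lemma next_epoch_mean_linear_growth:
  fixes A :: "('n::finite \<Rightarrow> nat) pmf"
    and evac :: "('p,'s::finite,'n) evac_law"
    and pol :: "('n \<Rightarrow> nat) \<Rightarrow> 's \<Rightarrow> 'p"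
  assumes sub: "\<And>s k l. Tstar evac Adm s (\<lambda>i. k i + l i)
                  \<le> Tstar evac Adm s k + ennreal (C1 * real (\<Sum>i\<in>UNIV. l i) + C0)"
    and mono: "\<And>s k d. Tstar evac Adm s k
                  \<le> Tstar evac Adm s (\<lambda>i. k i + d i) + ennreal (D0 * real (\<Sum>i\<in>UNIV. d i))"
    and C0: "0 \<le> C0" and C1: "0 \<le> C1" and D0: "0 \<le> D0"
    and SA1: "\<And>s k. Tstar evac Adm s k < \<top>"
    and arr_mean: "\<And>i. integrable (measure_pmf A) (\<lambda>a. real (a i))"
    and pol_eps: "\<And>k s. Tbar evac (pol k s) s k \<le> Tstar evac Adm s k + ennreal \<epsilon>"
    and eps: "0 \<le> \<epsilon>"
    and hatT: "(\<lambda>t::nat. enn2real (Tmax_real evac Adm (\<lambda>i. real t * mean_rate A i)) / real t)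
                 \<longlonglongrightarrow> L"
    and eta: "0 < \<eta>"
  shows "\<exists>W\<ge>0. \<forall>\<tau> s. next_epoch_mean A evac pol \<tau> s
                      \<le> ennreal (W + (L + \<eta> * (1 + (C1 + D0) * real CARD('n))) * real \<tau>)"
proof -
  define K where "K = C1 + D0"
  define n where "n = real CARD('n)"
  define T where "T t = enn2real (Tmax_real evac Adm (\<lambda>i. real t * mean_rate A i))" for t
  have K0: "0 \<le> K"
    using C1 D0 by (simp add: K_def)
  have T0: "0 \<le> T t" for t
    by (simp add: T_def)
  have rate0: "0 \<le> real t * mean_rate A i" for t i
    by (simp add: mean_rate_def)
  obtain S where S0: "0 \<le> S" and T_lin: "\<And>t. T t \<le> S + (L + \<eta>) * real t"
    using linear_bound_of_ratio_limit[OF hatT eta] unfolding T_def by blast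
  have "\<forall>i. \<exists>B\<ge>0. \<forall>t. (\<integral>\<^sup>+ k. ennreal \<bar>real (k i) - real t * mean_rate A i\<bar> \<partial>measure_pmf (arrivals A t))
                         \<le> ennreal (\<eta> * real t + B)"
    using arrivals_abs_deviation[OF arr_mean eta] by blast
  then obtain B where B0: "\<And>i. 0 \<le> B i"
    and B: "\<And>i t. (\<integral>\<^sup>+ k. ennreal \<bar>real (k i) - real t * mean_rate A i\<bar> \<partial>measure_pmf (arrivals A t))
                   \<le> ennreal (\<eta> * real t + B i)"
    by metis
  define W where "W = S + C0 + D0 * n + \<epsilon> + K * (\<Sum>i\<in>UNIV. B i)"
  have W0: "0 \<le> W"
    using S0 C0 D0 eps K0 B0 by (simp add: W_def n_def sum_nonneg)
  have "next_epoch_mean A evac pol \<tau> s \<le> ennreal (W + (L + \<eta> * (1 + K * n)) * real \<tau>)" for \<tau> s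
  proof -
    define a where "a = T \<tau> + C0 + D0 * n"
    have a0: "0 \<le> a"
      using T0 C0 D0 by (simp add: a_def n_def)
    have "Tstar evac Adm s k \<le> ennreal (a + K * (\<Sum>i\<in>UNIV. \<bar>real (k i) - real \<tau> * mean_rate A i\<bar>))" for k
      using Tstar_deviation_bound[OF sub mono C0 C1 D0 SA1 rate0]
      by (simp add: a_def T_def K_def n_def)
    then have "next_epoch_mean A evac pol \<tau> s \<le> ennreal (a + \<epsilon>) + ennreal K *
        (\<Sum>i\<in>UNIV. \<integral>\<^sup>+ k. ennreal \<bar>real (k i) - real \<tau> * mean_rate A i\<bar> \<partial>measure_pmf (arrivals A \<tau>))"
      using pol_eps a0 K0 eps by (rule next_epoch_mean_le_deviation)
    also have "\<dots> \<le> ennreal (a + \<epsilon>) + ennreal K * (\<Sum>i\<in>UNIV. ennreal (\<eta> * real \<tau> + B i))"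
      by (intro add_left_mono mult_left_mono sum_mono B) simp
    also have "\<dots> = ennreal (a + \<epsilon> + K * (n * \<eta> * real \<tau> + (\<Sum>i\<in>UNIV. B i)))"
      using a0 eps K0 eta B0
      by (simp add: sum_ennreal ennreal_mult[symmetric] ennreal_plus[symmetric] sum_nonneg
          sum.distrib n_def del: ennreal_plus)
    also have "\<dots> \<le> ennreal (W + (L + \<eta> * (1 + K * n)) * real \<tau>)"
      using T_lin[of \<tau>] by (intro ennreal_leI) (simp add: W_def a_def algebra_simps)
    finally show ?thesis .
  qed
  then show ?thesis
    using W0 unfolding K_def n_def by blast
qed

text \<open>Theorem 6.  Choosing eta so small that the slope becomes 1 - (1 - L)/2 gives the
  drift condition with delta = (1 - L)/2 and U = W + 1.\<close>

theorem mainTheorem6: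
  fixes A :: "('n::finite \<Rightarrow> nat) pmf"
    and evac :: "('p,'s::finite,'n) evac_law"
    and Adm :: "'p set"
    and pol :: "('n \<Rightarrow> nat) \<Rightarrow> 's \<Rightarrow> 'p"
    and \<epsilon> L :: real
  assumes convention0: "\<And>p s. p \<in> Adm \<Longrightarrow> Tbar evac p s (\<lambda>_. 0) = 1"
    and F2F3: "\<And>p q s k l. p \<in> Adm \<Longrightarrow> (\<And>s'. q s' \<in> Adm) \<Longrightarrow>
          \<exists>r\<in>Adm. Tbar evac r s (\<lambda>i. k i + l i)
                  \<le> Tbar evac p s k + (SUP s'. Tbar evac (q s') s' l)"
    and SA1: "\<And>s k. Tstar evac Adm s k < \<top>"
    and SA5: "\<exists>ph\<in>Adm. \<exists>C0 C1. 0 \<le> C0 \<and> 0 \<le> C1 \<and>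
          (\<forall>s k. Tbar evac ph s k \<le> ennreal (C1 * real (\<Sum>i\<in>UNIV. k i) + C0))"
    and SA6: "\<exists>D0. \<forall>s k i. Tstar evac Adm s k \<le> Tstar evac Adm s (k(i := k i + 1)) + ennreal D0"
    and arr_mean: "\<And>i. integrable (measure_pmf A) (\<lambda>a. real (a i))"
    and pol_in: "\<And>k s. pol k s \<in> Adm"
    and pol_eps: "\<And>k s. Tbar evac (pol k s) s k \<le> Tstar evac Adm s k + ennreal \<epsilon>"
    and hatT: "(\<lambda>t::nat. enn2real (Tmax_real evac Adm (\<lambda>i. real t * mean_rate A i)) / real t)
                 \<longlonglongrightarrow> L"
    and hatT_lt1: "L < 1"
    and eps_pos: "0 < \<epsilon>"
    and eps_lt: "\<epsilon> < 1 - L"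
  shows "\<exists>U>0. \<exists>\<delta>. 0 < \<delta> \<and> \<delta> \<le> 1 \<and>
           (\<forall>\<tau> s. 1 \<le> \<tau> \<longrightarrow>
              next_epoch_mean A evac pol \<tau> s \<le> ennreal (U + (1 - \<delta>) * real \<tau>)) \<and>
           (\<forall>\<delta>1>0. finite {(\<tau>, s::'s). 1 \<le> \<tau> \<and> U / real \<tau> > \<delta>1})"
proof -
  obtain ph C0 C1 where ph: "ph \<in> Adm" and C0: "0 \<le> C0" and C1: "0 \<le> C1"
    and ph_bound: "\<And>s k. Tbar evac ph s k \<le> ennreal (C1 * real (\<Sum>i\<in>UNIV. k i) + C0)"
    using SA5 by blast
  obtain D where "\<And>s k i. Tstar evac Adm s k \<le> Tstar evac Adm s (k(i := k i + 1)) + ennreal D"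
    using SA6 by blast
  then have SA6': "Tstar evac Adm s k \<le> Tstar evac Adm s (k(i := k i + 1)) + ennreal (max 0 D)" for s k i
    by (cases "0 \<le> D") (auto simp: ennreal_neg)
  have D0: "0 \<le> max 0 D"
    by simp
  define \<rho> where "\<rho> = 1 + (C1 + max 0 D) * real CARD('n)"
  have "1 \<le> \<rho>"
    using C1 by (simp add: \<rho>_def)
  define \<eta> where "\<eta> = (1 - L) / (2 * \<rho>)"
  have \<eta>: "0 < \<eta>" and drift: "L + \<eta> * \<rho> = 1 - (1 - L) / 2"
    using hatT_lt1 \<open>1 \<le> \<rho>\<close> by (auto simp: \<eta>_def field_simps)
  obtain W where W: "0 \<le> W"
    and growth: "\<And>\<tau> s. next_epoch_mean A evac pol \<tau> s \<le> ennreal (W + (L + \<eta> * \<rho>) * real \<tau>)"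
    using next_epoch_mean_linear_growth[OF Tstar_add_by_bounded_policy[OF F2F3 ph ph_bound]
        Tstar_add_vector[OF D0 SA6'] C0 C1 D0 SA1 arr_mean pol_eps _ hatT \<eta>] eps_pos
    unfolding \<rho>_def by auto
  have "0 \<le> L"
    by (rule LIMSEQ_le_const[OF hatT]) auto
  have "next_epoch_mean A evac pol \<tau> s \<le> ennreal (W + 1 + (1 - (1 - L) / 2) * real \<tau>)" for \<tau> s
    using growth[of \<tau> s] unfolding drift by (rule order_trans) (simp add: ennreal_leI)
  moreover have "\<forall>\<delta>1>0. finite {(\<tau>, s::'s). 1 \<le> \<tau> \<and> (W + 1) / real \<tau> > \<delta>1}"
    using finite_ratio_superlevel by blast
  moreover have "0 < W + 1" and "0 < (1 - L) / 2" and "(1 - L) / 2 \<le> 1"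
    using W \<open>0 \<le> L\<close> hatT_lt1 by auto
  ultimately show ?thesis
    by blast
qed

end
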